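(* Let $\Sigma$ be a $d\times d_1$ matrix function on $\mathbb{R}^d$ with bounded Borel measurable entries such that $\Sigma(x)\neq\Sigma(y)$ whenever $x\neq y$, let $A=\Sigma\Sigma^t$, and let $b$ be a Borel vector field with $\langle x-y,b(x)-b(y)\rangle\ge0$ for all $x,y$. Then there exists at most one probability solution $\mu$ to $L^*\mu=0$ with $\int|b(x)||x|\,\mu(dx)<\infty$. In particular, if $b=0$ then $L^*\mu=0$ has at most one probability solution, and if moreover $\Sigma(x_0)=0$ for some $x_0$, then $\delta_{x_0}$ is the only probability solution.
   Context: For a symmetric nonnegative definite matrix $A(x)=(a^{ij}(x))$ and a vector field $b(x)=(b^i(x))$ with Borel measurable entries, $Lf(x)=\mathrm{trace}(A(x)D^2f(x))+\langle b(x),\nabla f(x)\rangle$. A probability solution to $L^*\mu=0$ is a Borel probability measure $\mu$ on $\mathbb{R}^d$ such that all $a^{ij}$ and $b^i$ are $\mu$-integrable on every compact set and $\int_{\mathbb{R}^d}Lf\,d\mu=0$ for every $f\in C_0^\infty(\mathbb{R}^d)$. *)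

theory Defs
  imports "HOL-Analysis.Analysis" "HOL-Probability.Probability"
begin

definition partial :: "'n::finite \<Rightarrow> (real^'n \<Rightarrow> real) \<Rightarrow> real^'n \<Rightarrow> real" where
  "partial i f x = frechet_derivative f (at x) (axis i 1)"

fun Ck :: "nat \<Rightarrow> (real^'n::finite \<Rightarrow> real) \<Rightarrow> bool" where
  "Ck 0 f = continuous_on UNIV f"
| "Ck (Suc k) f = ((\<forall>x. f differentiable (at x)) \<and> continuous_on UNIV f \<and>
                   (\<forall>i. Ck k (partial i f)))"

definition smooth :: "(real^'n::finite \<Rightarrow> real) \<Rightarrow> bool" where
  "smooth f = (\<forall>k. Ck k f)"

definition test_fun :: "(real^'n::finite \<Rightarrow> real) \<Rightarrow> bool" where
  "test_fun f = (smooth f \<and> compact (closure {x. f x \<noteq> 0}))"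

definition Lop :: "(real^'n \<Rightarrow> real^'n^'n) \<Rightarrow> (real^'n \<Rightarrow> real^'n) \<Rightarrow>
    (real^'n::finite \<Rightarrow> real) \<Rightarrow> real^'n \<Rightarrow> real" where
  "Lop A b f x = (\<Sum>i\<in>UNIV. \<Sum>j\<in>UNIV. A x $ i $ j * partial j (partial i f) x)
               + (\<Sum>i\<in>UNIV. b x $ i * partial i f x)"

definition prob_solution :: "(real^'n \<Rightarrow> real^'n^'n) \<Rightarrow> (real^'n \<Rightarrow> real^'n) \<Rightarrow>
    (real^'n::finite) measure \<Rightarrow> bool" where
  "prob_solution A b \<mu> =
     (prob_space \<mu> \<and> sets \<mu> = sets borel \<and>
      (\<forall>K. compact K \<longrightarrow>
         (\<forall>i j. set_integrable \<mu> K (\<lambda>x. A x $ i $ j)) \<and>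
         (\<forall>i. set_integrable \<mu> K (\<lambda>x. b x $ i))) \<and>
      (\<forall>f. test_fun f \<longrightarrow> (\<integral>x. Lop A b f x \<partial>\<mu>) = 0))"

end

theory Submission
  imports Defs "HOL-Computational_Algebra.Polynomial"
begin

(* Test L^* mu = 0 against f_R(x) = zeta_R(x) (c_R |x|^2 - 2 <m_R, x>), where
   zeta_R(x) = zeta(1 - |x|^2 / R^2) is a smooth cutoff built from zeta(t) = exp(-1/t),
   c_R = int zeta_R dmu and m_R = int zeta_R(x) x mu(dx).  Up to terms that vanish as R -> oo
   by dominated convergence (this is where int |b(x)| |x| mu(dx) < oo enters), int L f_R dmu is
     2 c_R int zeta_R |Sigma|^2 dmu + int int zeta_R(x) zeta_R(y) <b(x) - b(y), x - y> mu(dx) mu(dy),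
   and the double integral is nonnegative because b is monotone.  Letting R -> oo gives
   int |Sigma|^2 dmu <= 0, so Sigma = 0 mu-a.e.; as Sigma is injective it vanishes at most at one
   point x0, hence mu = delta_x0. *)

section \<open>A smooth function vanishing on the negative half-line\<close>

text \<open>The derivatives of \<open>exp (- 1/t)\<close> stay in the family \<open>p (1/t) * exp (- 1/t)\<close>.\<close>

definition exp_bump :: "real poly \<Rightarrow> real \<Rightarrow> real" where
  "exp_bump p t = (if t > 0 then poly p (1/t) * exp (- (1/t)) else 0)"

definition bump_deriv_poly :: "real poly \<Rightarrow> real poly" where
  "bump_deriv_poly p = [:0, 0, 1:] * (p - pderiv p)"

lemma poly_times_exp_neg_tendsto_0: "((\<lambda>u. poly (p :: real poly) u * exp (- u)) \<longlongrightarrow> 0) at_top"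
proof -
  have "((\<lambda>u. \<Sum>i\<le>degree p. coeff p i * (u ^ i / exp u)) \<longlongrightarrow> (\<Sum>i\<le>degree p. coeff p i * 0)) at_top"
    by (intro tendsto_sum tendsto_mult tendsto_const tendsto_power_div_exp_0)
  moreover have "(\<lambda>u. \<Sum>i\<le>degree p. coeff p i * (u ^ i / exp u)) = (\<lambda>u. poly p u * exp (- u))"
    by (auto simp: poly_altdef sum_distrib_right exp_minus divide_inverse mult.assoc)
  ultimately show ?thesis by simp
qed

lemma exp_bump_nonpos: "t \<le> 0 \<Longrightarrow> exp_bump p t = 0"
  by (simp add: exp_bump_def)

lemma exp_bump_has_real_derivative:
  "(exp_bump p has_real_derivative exp_bump (bump_deriv_poly p) t) (at t)"
proof (cases t "0 :: real" rule: linorder_cases)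
  case greater
  have "((\<lambda>s. poly p (1/s) * exp (- (1/s))) has_real_derivative
      poly (pderiv p) (1/t) * (- 1 / t^2) * exp (- (1/t)) + poly p (1/t) * (exp (- (1/t)) * (1/t^2))) (at t)"
    using greater
    by (auto intro!: derivative_eq_intros DERIV_chain2[OF poly_DERIV] simp: power2_eq_square field_simps)
  also have "poly (pderiv p) (1/t) * (- 1 / t^2) * exp (- (1/t)) + poly p (1/t) * (exp (- (1/t)) * (1/t^2))
      = exp_bump (bump_deriv_poly p) t"
    using greater by (simp add: exp_bump_def bump_deriv_poly_def algebra_simps power2_eq_square)
  finally show ?thesis
    by (rule has_field_derivative_transform_within_open[of _ _ _ "{0<..}"])
      (use greater in \<open>auto simp: exp_bump_def\<close>)
next
  case less
  have "((\<lambda>s. 0) has_real_derivative 0) (at t)" by simp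
  then have "(exp_bump p has_real_derivative 0) (at t)"
    by (rule has_field_derivative_transform_within_open[of _ _ _ "{..<0}"])
      (use less in \<open>auto simp: exp_bump_def\<close>)
  then show ?thesis using less by (simp add: exp_bump_def)
next
  case equal
  have "((\<lambda>h. exp_bump p h / h) \<longlongrightarrow> 0) (at 0)"
  proof (subst filterlim_at_split, rule conjI)
    show "((\<lambda>h. exp_bump p h / h) \<longlongrightarrow> 0) (at_left 0)"
      by (rule tendsto_eventually, rule eventually_mono[OF eventually_at_left_real[of "-1" 0]])
        (auto simp: exp_bump_def)
    have "((\<lambda>h. exp_bump p (inverse h) / (inverse h)) \<longlongrightarrow> 0) at_top"
      by (rule Lim_transform_eventually[OF poly_times_exp_neg_tendsto_0[of "pCons 0 p"]])
        (auto simp: eventually_at_top_linorder exp_bump_def field_simps intro!: exI[of _ 1])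
    then show "((\<lambda>h. exp_bump p h / h) \<longlongrightarrow> 0) (at_right 0)"
      by (simp add: filterlim_at_right_to_top)
  qed
  then show ?thesis using equal by (simp add: DERIV_def exp_bump_def)
qed

lemma deriv_exp_bump: "deriv (exp_bump p) = exp_bump (bump_deriv_poly p)"
  using DERIV_imp_deriv[OF exp_bump_has_real_derivative] by blast

lemma continuous_on_exp_bump: "continuous_on UNIV (exp_bump p)"
  by (meson DERIV_isCont continuous_at_imp_continuous_on exp_bump_has_real_derivative)

lemma exp_bump_measurable [measurable]: "exp_bump p \<in> borel_measurable borel"
  by (rule borel_measurable_continuous_onI[OF continuous_on_exp_bump])

lemma exp_bump_bounded_le_1: "\<exists>K. \<forall>t\<le>1. \<bar>exp_bump p t\<bar> \<le> K"
proof -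
  have "compact (exp_bump p ` {0..1})"
    by (intro compact_continuous_image compact_Icc continuous_on_subset[OF continuous_on_exp_bump]) auto
  then obtain K where K: "\<forall>y\<in>exp_bump p ` {0..1}. norm y \<le> K"
    using compact_imp_bounded bounded_iff by metis
  have "0 \<le> K" using K[rule_format, OF imageI[of 0]] by (simp add: exp_bump_nonpos)
  then have "\<bar>exp_bump p t\<bar> \<le> K" if "t \<le> 1" for t
    using K that by (cases "t \<le> 0") (auto simp: exp_bump_nonpos)
  then show ?thesis by blast
qed

lemma exp_bump_1_bounds: "0 \<le> exp_bump 1 t" "exp_bump 1 t \<le> 1"
  by (simp_all add: exp_bump_def)

section \<open>Smoothness of functions built from coordinates\<close>

definition smooth_real :: "(real \<Rightarrow> real) \<Rightarrow> bool" where
  "smooth_real g = (\<forall>k x. (deriv ^^ k) g differentiable (at x))"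

lemma smooth_real_exp_bump: "smooth_real (exp_bump p)"
proof -
  have "(deriv ^^ k) (exp_bump p) = exp_bump ((bump_deriv_poly ^^ k) p)" for k
    by (induction k arbitrary: p)
      (simp_all add: deriv_exp_bump funpow_Suc_right del: funpow.simps(2))
  then show ?thesis
    unfolding smooth_real_def using exp_bump_has_real_derivative real_differentiable_def by metis
qed

lemma smooth_real_deriv: "smooth_real g \<Longrightarrow> smooth_real (deriv g)"
  unfolding smooth_real_def by (metis funpow_Suc_right o_apply)

lemma smooth_real_has_real_derivative:
  "smooth_real g \<Longrightarrow> (g has_real_derivative deriv g x) (at x)"
  unfolding smooth_real_def by (metis DERIV_deriv_iff_real_differentiable funpow_0)

lemma partial_eq_derivative: "(f has_derivative f') (at x) \<Longrightarrow> partial i f x = f' (axis i 1)"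
  unfolding partial_def by (metis frechet_derivative_at)

lemma partial_const: "partial i (\<lambda>x. c) = (\<lambda>x. 0)"
  by (rule ext, rule partial_eq_derivative) (rule has_derivative_const)

lemma partial_vec_nth: "partial i (\<lambda>x. x $ j) = (\<lambda>x. if j = i then 1 else 0)"
proof (rule ext)
  fix x :: "real^'a"
  have "((\<lambda>x. x $ j) has_derivative (\<lambda>h. h $ j)) (at x)"
    by (rule bounded_linear_imp_has_derivative[OF bounded_linear_vec_nth])
  then show "partial i (\<lambda>x. x $ j) x = (if j = i then 1 else 0)"
    by (auto dest!: partial_eq_derivative[of _ _ _ i] simp: axis_def)
qed

lemma partial_add:
  assumes "\<And>x. f differentiable (at x)" "\<And>x. g differentiable (at x)"
  shows "partial i (\<lambda>x. f x + g x) = (\<lambda>x. partial i f x + partial i g x)"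
  using partial_eq_derivative[OF has_derivative_add[OF
      frechet_derivative_works[THEN iffD1, OF assms(1)] frechet_derivative_works[THEN iffD1, OF assms(2)]]]
  by (simp add: partial_def fun_eq_iff)

lemma partial_mult:
  assumes "\<And>x. f differentiable (at x)" "\<And>x. g differentiable (at x)"
  shows "partial i (\<lambda>x. f x * g x) = (\<lambda>x. f x * partial i g x + partial i f x * g x)"
  using partial_eq_derivative[OF has_derivative_mult[OF
      frechet_derivative_works[THEN iffD1, OF assms(1)] frechet_derivative_works[THEN iffD1, OF assms(2)]]]
  by (simp add: partial_def fun_eq_iff)

lemma partial_compose:
  assumes "smooth_real g" "\<And>x. f differentiable (at x)"
  shows "partial i (\<lambda>x. g (f x)) = (\<lambda>x. partial i f x * deriv g (f x))"
  using partial_eq_derivative[OF DERIV_compose_FDERIV[OF smooth_real_has_real_derivative[OF assms(1)]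
      frechet_derivative_works[THEN iffD1, OF assms(2)]]]
  by (simp add: partial_def fun_eq_iff)

inductive elementary_smooth :: "(real^'n::finite \<Rightarrow> real) \<Rightarrow> bool" where
  const: "elementary_smooth (\<lambda>x. c)"
| vec_nth: "elementary_smooth (\<lambda>x. x $ i)"
| add: "elementary_smooth f \<Longrightarrow> elementary_smooth g \<Longrightarrow> elementary_smooth (\<lambda>x. f x + g x)"
| mult: "elementary_smooth f \<Longrightarrow> elementary_smooth g \<Longrightarrow> elementary_smooth (\<lambda>x. f x * g x)"
| compose: "smooth_real g \<Longrightarrow> elementary_smooth f \<Longrightarrow> elementary_smooth (\<lambda>x. g (f x))"

lemma elementary_smooth_differentiable_partial:
  "elementary_smooth f \<Longrightarrow> (\<forall>x. f differentiable (at x)) \<and> (\<forall>i. elementary_smooth (partial i f))"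
proof (induction rule: elementary_smooth.induct)
  case (const c)
  then show ?case by (simp add: partial_const elementary_smooth.const)
next
  case (vec_nth j)
  have "elementary_smooth (\<lambda>x::real^'a. if j = i then 1 else 0)" for i
    by (rule elementary_smooth.const)
  then show ?case
    by (simp add: partial_vec_nth bounded_linear_imp_differentiable[OF bounded_linear_vec_nth])
next
  case (add f g)
  then have "elementary_smooth (\<lambda>x. partial i f x + partial i g x)" for i
    by (intro elementary_smooth.add) auto
  then show ?case using add by (simp add: partial_add)
next
  case (mult f g)
  then have "elementary_smooth (\<lambda>x. f x * partial i g x + partial i f x * g x)" for i
    by (intro elementary_smooth.add elementary_smooth.mult) auto
  then show ?case using mult by (simp add: partial_mult)
next
  case (compose g f)
  have "g differentiable (at y)" for y
    using smooth_real_has_real_derivative[OF compose(1)] real_differentiable_def by blast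
  then have "(\<lambda>x. g (f x)) differentiable (at x)" for x
    using compose differentiable_chain_at[of f x g] by (simp add: o_def)
  moreover have "elementary_smooth (\<lambda>x. partial i f x * deriv g (f x))" for i
    using compose
    by (intro elementary_smooth.mult elementary_smooth.compose[of "deriv g" f] smooth_real_deriv) auto
  ultimately show ?case using compose by (simp add: partial_compose)
qed

lemma elementary_smooth_continuous_on: "elementary_smooth f \<Longrightarrow> continuous_on UNIV f"
  using elementary_smooth_differentiable_partial
  by (blast intro: continuous_at_imp_continuous_on differentiable_imp_continuous_within)

lemma elementary_smooth_imp_smooth: "elementary_smooth f \<Longrightarrow> smooth f"
proof -
  have "elementary_smooth f \<Longrightarrow> Ck k f" for k
  proof (induction k arbitrary: f)
    case (Suc k)
    then show ?case
      using elementary_smooth_differentiable_partial[OF Suc.prems]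
        elementary_smooth_continuous_on[OF Suc.prems] by simp
  qed (simp add: elementary_smooth_continuous_on)
  then show "elementary_smooth f \<Longrightarrow> smooth f" by (simp add: smooth_def)
qed

lemma elementary_smooth_sum:
  "finite S \<Longrightarrow> (\<And>i. i \<in> S \<Longrightarrow> elementary_smooth (f i)) \<Longrightarrow> elementary_smooth (\<lambda>x. \<Sum>i\<in>S. f i x)"
  by (induction S rule: finite_induct) (auto intro: elementary_smooth.const elementary_smooth.add)

lemma elementary_smooth_inner:
  "elementary_smooth (\<lambda>x. inner x y)" "elementary_smooth (\<lambda>x. inner x x)"
  unfolding inner_vec_def
  by (auto intro!: elementary_smooth_sum elementary_smooth.mult elementary_smooth.const
      elementary_smooth.vec_nth simp: inner_real_def)

section \<open>The test functions\<close>

text \<open>\<open>cutoff_deriv k R x\<close> is the \<open>k\<close>-th derivative of \<open>exp_bump 1\<close> at \<open>1 - |x|^2 / R^2\<close>.\<close>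

definition cutoff_deriv :: "nat \<Rightarrow> real \<Rightarrow> real^'n::finite \<Rightarrow> real" where
  "cutoff_deriv k R x = exp_bump ((bump_deriv_poly ^^ k) 1) (1 - inner x x / R^2)"

abbreviation cutoff :: "real \<Rightarrow> real^'n::finite \<Rightarrow> real" where
  "cutoff \<equiv> cutoff_deriv 0"

definition quadratic :: "real \<Rightarrow> real^'n::finite \<Rightarrow> real^'n \<Rightarrow> real" where
  "quadratic c m x = c * inner x x - 2 * inner m x"

definition test_quadratic :: "real \<Rightarrow> real \<Rightarrow> real^'n::finite \<Rightarrow> real^'n \<Rightarrow> real" where
  "test_quadratic R c m x = cutoff R x * quadratic c m x"

text \<open>The parts of the first and second partial derivatives of \<open>test_quadratic\<close> in which
  the cutoff is differentiated.\<close>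

definition cutoff_term1 :: "real \<Rightarrow> real \<Rightarrow> real^'n::finite \<Rightarrow> 'n \<Rightarrow> real^'n \<Rightarrow> real" where
  "cutoff_term1 R c m i x = cutoff_deriv 1 R x * (-2 * x$i / R^2) * quadratic c m x"

definition cutoff_term2 :: "real \<Rightarrow> real \<Rightarrow> real^'n::finite \<Rightarrow> 'n \<Rightarrow> 'n \<Rightarrow> real^'n \<Rightarrow> real" where
  "cutoff_term2 R c m i j x =
     cutoff_deriv 2 R x * (-2 * x$j / R^2) * (-2 * x$i / R^2) * quadratic c m x
     + cutoff_deriv 1 R x * (-2 * (if i = j then 1 else 0) / R^2) * quadratic c m x
     + cutoff_deriv 1 R x * (-2 * x$i / R^2) * (2*c*x$j - 2*m$j)
     + cutoff_deriv 1 R x * (-2 * x$j / R^2) * (2*c*x$i - 2*m$i)"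

lemma has_derivative_affine_vec_nth:
  fixes a b :: real
  shows "((\<lambda>x::real^'n::finite. a * x$i + b) has_derivative (\<lambda>h. a * h$i)) (at x)"
  using bounded_linear_compose[OF bounded_linear_mult_right[of a] bounded_linear_vec_nth[of i]]
  by (intro has_derivative_add_const bounded_linear_imp_has_derivative) (simp add: o_def)

lemma cutoff_deriv_has_derivative:
  "(cutoff_deriv k R has_derivative (\<lambda>h. (-2 * inner x h / R^2) * cutoff_deriv (Suc k) R x)) (at x)"
proof -
  have "((\<lambda>x. 1 - inner x x / R^2) has_derivative (\<lambda>h. 0 - (inner x h + inner h x) / R^2)) (at x)"
    by (intro has_derivative_diff has_derivative_const bounded_linear.has_derivative[OF bounded_linear_divide]
        has_derivative_inner has_derivative_ident)
  then have "((\<lambda>x. 1 - inner x x / R^2) has_derivative (\<lambda>h. -2 * inner x h / R^2)) (at x)"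
    by (simp add: inner_commute)
  from DERIV_compose_FDERIV[OF exp_bump_has_real_derivative this]
  show ?thesis by (simp add: cutoff_deriv_def[abs_def])
qed

lemma quadratic_has_derivative:
  "(quadratic c m has_derivative (\<lambda>h. 2 * c * inner x h - 2 * inner m h)) (at x)"
  unfolding quadratic_def[abs_def]
  by (rule has_derivative_eq_rhs, (auto intro!: derivative_eq_intros)[1])
    (auto simp: inner_commute algebra_simps)

lemma partial_test_quadratic:
  "partial i (test_quadratic R c m) = (\<lambda>x. cutoff_term1 R c m i x + cutoff R x * (2*c*x$i - 2*m$i))"
proof (rule ext)
  fix x
  have "(test_quadratic R c m has_derivative
      (\<lambda>h. (-2 * inner x h / R^2) * cutoff_deriv 1 R x * quadratic c m x
        + cutoff R x * (2 * c * inner x h - 2 * inner m h))) (at x)"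
    unfolding test_quadratic_def[abs_def]
    by (rule has_derivative_eq_rhs,
        rule has_derivative_mult[OF cutoff_deriv_has_derivative quadratic_has_derivative])
      (auto simp: field_simps)
  from partial_eq_derivative[OF this, of i]
  show "partial i (test_quadratic R c m) x = cutoff_term1 R c m i x + cutoff R x * (2*c*x$i - 2*m$i)"
    by (simp add: cutoff_term1_def inner_axis)
qed

lemma partial_partial_test_quadratic:
  "partial j (partial i (test_quadratic R c m)) =
     (\<lambda>x. cutoff_term2 R c m i j x + cutoff R x * (2 * c * (if i = j then 1 else 0)))"
proof (rule ext)
  fix x
  have eq: "partial i (test_quadratic R c m) = (\<lambda>x.
      cutoff_deriv 1 R x * ((-2 / R^2) * x$i + 0) * quadratic c m x + cutoff R x * ((2*c) * x$i + (-2*m$i)))"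
    by (simp add: partial_test_quadratic cutoff_term1_def fun_eq_iff)
  have "((\<lambda>x. cutoff_deriv 1 R x * ((-2 / R^2) * x$i + 0) * quadratic c m x
      + cutoff R x * ((2*c) * x$i + (-2*m$i))) has_derivative (\<lambda>h.
      cutoff_deriv 1 R x * ((-2 / R^2) * x$i + 0) * (2 * c * inner x h - 2 * inner m h)
      + (cutoff_deriv 1 R x * ((-2 / R^2) * h$i)
        + (-2 * inner x h / R^2) * cutoff_deriv 2 R x * ((-2 / R^2) * x$i + 0)) * quadratic c m x
      + (cutoff R x * ((2*c) * h$i) + (-2 * inner x h / R^2) * cutoff_deriv 1 R x * ((2*c) * x$i + (-2*m$i)))))
      (at x)"
    by (intro has_derivative_add has_derivative_mult has_derivative_affine_vec_nth quadratic_has_derivative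
        cutoff_deriv_has_derivative[of 0, unfolded One_nat_def[symmetric]]
        cutoff_deriv_has_derivative[of 1, unfolded Suc_1])
  moreover have "axis j (1::real) $ i = (if i = j then 1 else 0)" by (simp add: axis_def)
  ultimately show "partial j (partial i (test_quadratic R c m)) x =
      cutoff_term2 R c m i j x + cutoff R x * (2 * c * (if i = j then 1 else 0))"
    using partial_eq_derivative[of _ _ x j] by (simp add: eq cutoff_term2_def inner_axis algebra_simps)
qed

lemma cutoff_deriv_eq_0: "R > 0 \<Longrightarrow> R \<le> norm x \<Longrightarrow> cutoff_deriv k R x = 0"
proof -
  assume "R > 0" "R \<le> norm x"
  then have "R^2 \<le> inner x x" by (simp add: power2_norm_eq_inner[symmetric] power_mono)
  with \<open>R > 0\<close> show ?thesis by (simp add: cutoff_deriv_def exp_bump_nonpos)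
qed

lemma cutoff_deriv_bounded: "\<exists>K. \<forall>R x. \<bar>cutoff_deriv k R x\<bar> \<le> K"
proof -
  obtain K where K: "\<forall>t\<le>1. \<bar>exp_bump ((bump_deriv_poly ^^ k) 1) t\<bar> \<le> K"
    using exp_bump_bounded_le_1 by blast
  have "1 - inner x x / R^2 \<le> 1" for x :: "real^'a" and R :: real by simp
  then show ?thesis using K unfolding cutoff_deriv_def by blast
qed

lemma cutoff_nonneg: "0 \<le> cutoff R x" and cutoff_le_1: "cutoff R x \<le> 1"
  by (simp_all add: cutoff_deriv_def exp_bump_1_bounds)

lemma abs_cutoff_le_1: "\<bar>cutoff R x\<bar> \<le> 1"
  by (simp add: abs_of_nonneg cutoff_nonneg cutoff_le_1)

lemma cutoff_deriv_measurable [measurable]: "cutoff_deriv k R \<in> borel_measurable borel"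
  unfolding cutoff_deriv_def[abs_def] by measurable

lemma tendsto_cutoff: "((\<lambda>R. cutoff R x) \<longlongrightarrow> exp (-1)) at_top"
proof -
  have "((\<lambda>R. 1 - inner x x * inverse (R^2)) \<longlongrightarrow> 1 - inner x x * 0) at_top"
    by (intro tendsto_intros tendsto_inverse_0_at_top filterlim_pow_at_top filterlim_ident) simp
  then have "((\<lambda>R. 1 - inner x x / R^2) \<longlongrightarrow> 1) at_top"
    by (simp add: divide_inverse)
  from isCont_tendsto_compose[OF DERIV_isCont[OF exp_bump_has_real_derivative[of 1]] this]
  show ?thesis by (simp add: cutoff_deriv_def exp_bump_def[of 1 1])
qed

lemma test_fun_test_quadratic: "R > 0 \<Longrightarrow> test_fun (test_quadratic R c m)"
proof -
  assume "R > 0"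
  have "test_quadratic R c m =
      (\<lambda>x. exp_bump 1 (1 + (- 1 / R^2) * inner x x) * (c * inner x x + (- 2) * inner x m))"
    by (simp add: fun_eq_iff test_quadratic_def cutoff_deriv_def quadratic_def inner_commute)
  then have "elementary_smooth (test_quadratic R c m)"
    by (simp only:) (intro elementary_smooth.mult elementary_smooth.add smooth_real_exp_bump
        elementary_smooth.compose[where g = "exp_bump 1"] elementary_smooth_inner elementary_smooth.const)
  moreover have "{x. test_quadratic R c m x \<noteq> 0} \<subseteq> cball 0 R"
    using cutoff_deriv_eq_0[OF \<open>R > 0\<close>] by (force simp: test_quadratic_def)
  then have "bounded {x. test_quadratic R c m x \<noteq> 0}"
    using bounded_subset bounded_cball by blast
  ultimately show ?thesis
    by (simp add: test_fun_def elementary_smooth_imp_smooth)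
qed

lemma cutoff_terms_eq_0:
  assumes "R > 0" "R \<le> norm x"
  shows "cutoff_term1 R c m i x = 0" "cutoff_term2 R c m i j x = 0"
  using cutoff_deriv_eq_0[OF assms] by (simp_all add: cutoff_term1_def cutoff_term2_def)

lemma abs_mult_mono: "\<bar>a\<bar> \<le> A \<Longrightarrow> \<bar>b\<bar> \<le> B \<Longrightarrow> \<bar>a * b\<bar> \<le> A * (B::real)"
  by (simp add: abs_mult mult_mono')

lemma abs_inner_le_card_mult_norm:
  fixes m x :: "real^'n::finite" and M :: real
  assumes "\<And>i. \<bar>m$i\<bar> \<le> M"
  shows "\<bar>inner m x\<bar> \<le> real CARD('n) * M * norm x"
proof -
  have "\<bar>inner m x\<bar> \<le> (\<Sum>i\<in>UNIV. \<bar>m$i * x$i\<bar>)"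
    unfolding inner_vec_def inner_real_def by (rule sum_abs)
  also have "\<dots> \<le> (\<Sum>i\<in>(UNIV::'n set). M * norm x)"
    by (intro sum_mono) (simp add: abs_mult assms component_le_norm_cart mult_mono')
  finally show ?thesis by simp
qed

lemma abs_quadratic_div_le:
  fixes m x :: "real^'n::finite"
  assumes "R > 0" "\<bar>c\<bar> \<le> 1" "\<And>i. \<bar>m$i\<bar> \<le> R" "norm x \<le> R"
  shows "\<bar>quadratic c m x / R^2\<bar> \<le> (1 + 2 * real CARD('n)) * (norm x / R)"
proof -
  have "\<bar>c\<bar> * (norm x * norm x) \<le> 1 * (R * norm x)"
    using assms by (intro mult_mono mult_right_mono) simp_all
  then have "\<bar>c * inner x x\<bar> \<le> R * norm x"
    by (simp add: abs_mult power2_norm_eq_inner[symmetric] power2_eq_square)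
  moreover have "\<bar>inner m x\<bar> \<le> CARD('n) * R * norm x"
    by (rule abs_inner_le_card_mult_norm[OF assms(3)])
  moreover have "\<bar>quadratic c m x\<bar> \<le> \<bar>c * inner x x\<bar> + 2 * \<bar>inner m x\<bar>"
    by (simp add: quadratic_def)
  ultimately have "\<bar>quadratic c m x\<bar> \<le> (1 + 2 * real CARD('n)) * (norm x / R) * R^2"
    using \<open>R > 0\<close> by (simp add: power2_eq_square algebra_simps)
  with \<open>R > 0\<close> show ?thesis by (simp add: pos_divide_le_eq)
qed

lemma cutoff_term1_bound:
  fixes m x :: "real^'n::finite"
  assumes K: "\<And>y::real^'n. \<bar>cutoff_deriv 1 R y\<bar> \<le> K"
    and "R > 0" "\<bar>c\<bar> \<le> 1" "\<And>i. \<bar>m$i\<bar> \<le> R"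
  shows "\<bar>cutoff_term1 R c m i x\<bar> \<le> 2 * K * (1 + 2 * real CARD('n)) * norm x * (norm x / R)"
proof (cases "R \<le> norm x")
  case True
  have "0 \<le> K" using K order_trans abs_ge_zero by blast
  with True \<open>R > 0\<close> show ?thesis by (simp add: cutoff_terms_eq_0)
next
  case False
  have "\<bar>cutoff_deriv 1 R x\<bar> * \<bar>x$i\<bar> \<le> K * norm x"
    using K[of x] component_le_norm_cart[of x i] by (intro mult_mono) auto
  then have "\<bar>-2 * cutoff_deriv 1 R x * x$i\<bar> \<le> 2 * K * norm x"
    by (simp add: abs_mult)
  moreover have "cutoff_term1 R c m i x = (-2 * cutoff_deriv 1 R x * x$i) * (quadratic c m x / R^2)"
    by (simp add: cutoff_term1_def)
  ultimately have "\<bar>cutoff_term1 R c m i x\<bar> \<le> (2 * K * norm x) * ((1 + 2 * real CARD('n)) * (norm x / R))"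
    using False abs_quadratic_div_le[OF assms(2-4), of x]
    by (simp only: abs_mult[of _ "quadratic c m x / R^2"]) (intro mult_mono, simp_all)
  then show ?thesis by (simp add: mult_ac)
qed

lemma cutoff_term2_bound:
  fixes m x :: "real^'n::finite"
  assumes K: "\<And>y::real^'n. \<bar>cutoff_deriv 1 R y\<bar> \<le> K" "\<And>y::real^'n. \<bar>cutoff_deriv 2 R y\<bar> \<le> K"
    and "R > 0" "\<bar>c\<bar> \<le> 1" "\<And>i. \<bar>m$i\<bar> \<le> R"
  shows "\<bar>cutoff_term2 R c m i j x\<bar> \<le> (6 * K * (1 + 2 * real CARD('n)) + 16 * K) * (norm x / R)"
proof (cases "R \<le> norm x")
  case True
  have "0 \<le> K" using K order_trans abs_ge_zero by blast
  with True \<open>R > 0\<close> show ?thesis by (simp add: cutoff_terms_eq_0)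
next
  case False
  define u where "u = norm x / R"
  define q where "q = quadratic c m x / R^2"
  define e where "e k = (2*c*x$k - 2*m$k) / R" for k
  define N :: real where "N = 1 + 2 * CARD('n)"
  have "0 \<le> K" using K order_trans abs_ge_zero by blast
  have u: "0 \<le> u" "u \<le> 1" using False \<open>R > 0\<close> by (simp_all add: u_def)
  have x: "\<bar>x$k / R\<bar> \<le> u" for k
    using \<open>R > 0\<close> component_le_norm_cart[of x k] by (simp add: u_def divide_right_mono)
  have q: "\<bar>q\<bar> \<le> N * u"
    using abs_quadratic_div_le[OF assms(3-5), of x] False by (simp add: q_def u_def N_def)
  have e: "\<bar>e k\<bar> \<le> 4" for k
  proof -
    have "\<bar>c\<bar> * \<bar>x$k\<bar> \<le> 1 * R"
      using False component_le_norm_cart[of x k] \<open>\<bar>c\<bar> \<le> 1\<close> by (intro mult_mono) auto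
    then have "\<bar>c * x$k\<bar> \<le> R" by (simp add: abs_mult)
    then have "\<bar>2*c*x$k - 2*m$k\<bar> \<le> 4 * R" using assms(5)[of k] by linarith
    with \<open>R > 0\<close> show ?thesis by (simp add: e_def pos_divide_le_eq)
  qed
  define a1 a2 where "a1 = cutoff_deriv 1 R x" and "a2 = cutoff_deriv 2 R x"
  define d :: real where "d = (if i = j then 1 else 0)"
  have a: "\<bar>a1\<bar> \<le> K" "\<bar>a2\<bar> \<le> K" using K[of x] by (simp_all add: a1_def a2_def)
  have "\<bar>d\<bar> \<le> 1" "0 \<le> N" by (simp_all add: d_def N_def)
  have uu: "u * u \<le> 1" using u by (simp add: mult_le_one)
  have "\<bar>a2 * 4 * (x$j / R) * (x$i / R) * q\<bar> \<le> K * 4 * u * u * (N * u)"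
    by (intro abs_mult_mono a x q) simp
  also have "\<dots> = 4 * K * N * (u * (u * u))" by simp
  also have "\<dots> \<le> 4 * K * N * (u * 1)"
    using uu u \<open>0 \<le> K\<close> \<open>0 \<le> N\<close> by (intro mult_left_mono) simp_all
  finally have t1: "\<bar>a2 * 4 * (x$j / R) * (x$i / R) * q\<bar> \<le> 4 * K * N * u" by simp
  have "\<bar>2 * d * a1 * q\<bar> \<le> 2 * 1 * K * (N * u)"
    by (intro abs_mult_mono a q \<open>\<bar>d\<bar> \<le> 1\<close>) simp
  then have t2: "\<bar>2 * d * a1 * q\<bar> \<le> 2 * K * N * u" by simp
  have t3: "\<bar>2 * a1 * (x$k / R) * e l\<bar> \<le> 2 * K * u * 4" for k l
    by (intro abs_mult_mono a x e) simp
  have "cutoff_term2 R c m i j x = a2 * 4 * (x$j / R) * (x$i / R) * q - 2 * d * a1 * q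
      - 2 * a1 * (x$i / R) * e j - 2 * a1 * (x$j / R) * e i"
    using \<open>R > 0\<close> unfolding a1_def a2_def d_def q_def e_def
    by (simp add: cutoff_term2_def power2_eq_square field_simps)
  then have "\<bar>cutoff_term2 R c m i j x\<bar> \<le> 4 * K * N * u + 2 * K * N * u + 2 * K * u * 4 + 2 * K * u * 4"
    using t1 t2 t3[of i j] t3[of j i] by linarith
  then show ?thesis by (simp add: u_def N_def algebra_simps)
qed

definition cutoff_remainder ::
    "(real^'n \<Rightarrow> real^'n^'n) \<Rightarrow> (real^'n \<Rightarrow> real^'n) \<Rightarrow> real \<Rightarrow> real \<Rightarrow> real^'n::finite \<Rightarrow> real^'n \<Rightarrow> real"
  where "cutoff_remainder A b R c m x =
    (\<Sum>i\<in>UNIV. \<Sum>j\<in>UNIV. A x $ i $ j * cutoff_term2 R c m i j x) + (\<Sum>i\<in>UNIV. b x $ i * cutoff_term1 R c m i x)"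

lemma Lop_test_quadratic:
  "Lop A b (test_quadratic R c m) x =
     cutoff_remainder A b R c m x + 2 * c * cutoff R x * trace (A x)
     + 2 * cutoff R x * inner (b x) (c *\<^sub>R x - m)"
  unfolding Lop_def partial_partial_test_quadratic
  by (simp add: partial_test_quadratic cutoff_remainder_def
      trace_def inner_vec_def distrib_left sum.distrib sum_distrib_left sum_subtractf
      right_diff_distrib if_distrib[of "\<lambda>t. _ * t"] sum.delta mult_ac)

lemma norm_matrix_power2: "(norm (M :: real^'m::finite^'n::finite))^2 = (\<Sum>i\<in>UNIV. \<Sum>k\<in>UNIV. (M $ i $ k)^2)"
  unfolding power2_norm_eq_inner by (simp add: inner_vec_def power2_eq_square)

lemma trace_mult_transpose_self: "trace (M ** transpose M) = (norm (M :: real^'m::finite^'n::finite))^2"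
  unfolding norm_matrix_power2 by (simp add: trace_def matrix_matrix_mult_def transpose_def power2_eq_square)

lemma abs_mult_transpose_self_le: "\<bar>(M ** transpose M) $ i $ j\<bar> \<le> (norm (M :: real^'m::finite^'n::finite))^2"
proof -
  have "(M ** transpose M) $ i $ j = inner (M $ i) (M $ j)"
    by (simp add: matrix_matrix_mult_def transpose_def inner_vec_def)
  also have "\<bar>\<dots>\<bar> \<le> norm (M $ i) * norm (M $ j)" by (rule Cauchy_Schwarz_ineq2)
  also have "\<dots> \<le> norm M * norm M" by (intro mult_mono Finite_Cartesian_Product.norm_nth_le) simp_all
  finally show ?thesis by (simp add: power2_eq_square)
qed

lemma cutoff_remainder_eq_0: "R > 0 \<Longrightarrow> R \<le> norm x \<Longrightarrow> cutoff_remainder A b R c m x = 0"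
  by (simp add: cutoff_remainder_def cutoff_terms_eq_0)

lemma cutoff_remainder_bound:
  fixes A :: "real^'n::finite \<Rightarrow> real^'n^'n" and b :: "real^'n \<Rightarrow> real^'n"
  assumes A: "\<And>x i j. \<bar>A x $ i $ j\<bar> \<le> \<alpha>"
  obtains D where "0 \<le> D"
    and "\<And>R c m x. R \<ge> 1 \<Longrightarrow> \<bar>c\<bar> \<le> 1 \<Longrightarrow> (\<And>i. \<bar>m $ i\<bar> \<le> R) \<Longrightarrow>
           \<bar>cutoff_remainder A b R c m x\<bar> \<le> D * (1 + norm (b x) * norm x) * (norm x / R)"
proof -
  obtain K1 K2 where K: "\<And>R (y::real^'n). \<bar>cutoff_deriv 1 R y\<bar> \<le> K1"
    "\<And>R (y::real^'n). \<bar>cutoff_deriv 2 R y\<bar> \<le> K2"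
    using cutoff_deriv_bounded by metis
  define K where "K = max K1 K2"
  define N where "N = real CARD('n)"
  define C1 where "C1 = 2 * K * (1 + 2 * N)"
  define C2 where "C2 = 6 * K * (1 + 2 * N) + 16 * K"
  define D where "D = max (N * N * \<alpha> * C2) (N * C1)"
  have "0 \<le> K" using K(1) by (metis K_def abs_ge_zero max.coboundedI1 order_trans)
  moreover have "0 \<le> \<alpha>" using A by (meson abs_ge_zero order_trans)
  ultimately have "0 \<le> C1" "0 \<le> C2" "0 \<le> N * N * \<alpha> * C2" by (simp_all add: C1_def C2_def N_def)
  then have "0 \<le> D" by (simp add: D_def)
  moreover have "\<bar>cutoff_remainder A b R c m x\<bar> \<le> D * (1 + norm (b x) * norm x) * (norm x / R)"
    if R: "R \<ge> 1" and c: "\<bar>c\<bar> \<le> 1" and m: "\<And>i. \<bar>m $ i\<bar> \<le> R" for R c m x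
  proof -
    have KR: "\<bar>cutoff_deriv 1 R y\<bar> \<le> K" "\<bar>cutoff_deriv 2 R y\<bar> \<le> K" for y :: "real^'n"
      using K[of R y] by (auto simp: K_def)
    have "\<bar>\<Sum>i\<in>UNIV. \<Sum>j\<in>UNIV. A x $ i $ j * cutoff_term2 R c m i j x\<bar>
        \<le> (\<Sum>i\<in>UNIV. \<Sum>j\<in>UNIV. \<bar>A x $ i $ j * cutoff_term2 R c m i j x\<bar>)"
      by (rule order_trans[OF sum_abs sum_mono[OF sum_abs]])
    also have "\<dots> \<le> (\<Sum>i\<in>(UNIV::'n set). \<Sum>j\<in>(UNIV::'n set). \<alpha> * (C2 * (norm x / R)))"
      using cutoff_term2_bound[OF KR, of c m] R c m
      by (intro sum_mono abs_mult_mono A) (simp add: C2_def N_def)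
    finally have t2: "\<bar>\<Sum>i\<in>UNIV. \<Sum>j\<in>UNIV. A x $ i $ j * cutoff_term2 R c m i j x\<bar>
        \<le> N * N * \<alpha> * C2 * (norm x / R)" by (simp add: N_def)
    have "\<bar>\<Sum>i\<in>UNIV. b x $ i * cutoff_term1 R c m i x\<bar> \<le> (\<Sum>i\<in>UNIV. \<bar>b x $ i * cutoff_term1 R c m i x\<bar>)"
      by (rule sum_abs)
    also have "\<dots> \<le> (\<Sum>i\<in>(UNIV::'n set). norm (b x) * (C1 * norm x * (norm x / R)))"
      using cutoff_term1_bound[OF KR(1), of c m] R c m
      by (intro sum_mono abs_mult_mono component_le_norm_cart) (simp add: C1_def N_def)
    finally have t1: "\<bar>\<Sum>i\<in>UNIV. b x $ i * cutoff_term1 R c m i x\<bar>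
        \<le> N * C1 * (norm (b x) * norm x) * (norm x / R)" by (simp add: N_def mult_ac)
    have "N * N * \<alpha> * C2 * (norm x / R) \<le> D * (norm x / R)"
      and "N * C1 * (norm (b x) * norm x) * (norm x / R) \<le> D * (norm (b x) * norm x) * (norm x / R)"
      using R by (intro mult_right_mono; simp add: D_def)+
    with t1 t2 show ?thesis
      unfolding cutoff_remainder_def by (simp add: algebra_simps)
  qed
  ultimately show ?thesis using that by blast
qed

lemma abs_cutoff_mult_component_le: "R > 0 \<Longrightarrow> \<bar>cutoff R x * x $ i\<bar> \<le> R"
proof (cases "R \<le> norm x")
  case False
  assume "R > 0"
  have "\<bar>cutoff R x\<bar> * \<bar>x $ i\<bar> \<le> 1 * R"
    using False component_le_norm_cart[of x i] cutoff_nonneg[of R x] cutoff_le_1[of R x]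
    by (intro mult_mono) auto
  then show ?thesis by (simp add: abs_mult)
qed (simp add: cutoff_deriv_eq_0)

section \<open>Monotone drifts\<close>

lemma measurable_sets_borel: "sets M = sets borel \<Longrightarrow> f \<in> borel_measurable borel \<Longrightarrow> f \<in> borel_measurable M"
  using measurable_cong_sets[of M borel borel borel] by simp

lemma vec_nth_borel_measurable [measurable]: "(\<lambda>v::real^'n::finite. v $ i) \<in> borel_measurable borel"
  by (rule borel_measurable_continuous_onI[OF linear_continuous_on[OF bounded_linear_vec_nth]])

lemma integrable_mult_bounded_supported:
  fixes \<mu> :: "(real^'n::finite) measure" and g h :: "real^'n \<Rightarrow> real"
  assumes S: "sets \<mu> = sets borel" and gm: "g \<in> borel_measurable borel"
    and gi: "set_integrable \<mu> (cball 0 R) g" and hm: "h \<in> borel_measurable borel"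
    and hb: "\<And>x. \<bar>h x\<bar> \<le> H" and hs: "\<And>x. h x \<noteq> 0 \<Longrightarrow> norm x \<le> R"
  shows "integrable \<mu> (\<lambda>x. h x * g x)"
proof -
  have I: "integrable \<mu> (\<lambda>x. H * (indicator (cball 0 R) x *\<^sub>R g x))"
    using gi unfolding set_integrable_def by (rule integrable_mult_right)
  have Mm: "(\<lambda>x. h x * g x) \<in> borel_measurable \<mu>"
    using measurable_sets_borel[OF S gm] measurable_sets_borel[OF S hm] by measurable
  have AE: "AE x in \<mu>. norm (h x * g x) \<le> norm (H * (indicator (cball 0 R) x *\<^sub>R g x))"
  proof (rule AE_I2)
    fix x
    show "norm (h x * g x) \<le> norm (H * (indicator (cball 0 R) x *\<^sub>R g x))"
    proof (cases "h x = 0")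
      case True then show ?thesis by simp
    next
      case False
      then have "x \<in> cball 0 R" using hs by auto
      moreover have "\<bar>h x\<bar> * \<bar>g x\<bar> \<le> \<bar>H\<bar> * \<bar>g x\<bar>" using hb[of x]
        by (intro mult_right_mono) auto
      ultimately show ?thesis by (simp add: abs_mult)
    qed
  qed
  show ?thesis by (rule Bochner_Integration.integrable_bound[OF I Mm AE])
qed

lemma integrable_bounded_borel:
  fixes \<mu> :: "(real^'n::finite) measure" and h :: "real^'n \<Rightarrow> real"
  assumes "prob_space \<mu>" "sets \<mu> = sets borel" "h \<in> borel_measurable borel" "\<And>x. \<bar>h x\<bar> \<le> H"
  shows "integrable \<mu> h"
proof -
  interpret prob_space \<mu> by fact
  show ?thesis
    by (rule integrable_const_bound[where B=H]) (use assms measurable_sets_borel in auto)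
qed

lemma integrable_weighted_moments:
  fixes \<mu> :: "(real^'n::finite) measure" and b :: "real^'n \<Rightarrow> real^'n" and w :: "real^'n \<Rightarrow> real"
  assumes P: "prob_space \<mu>" and S: "sets \<mu> = sets borel" and [measurable]: "b \<in> borel_measurable borel"
    and loc: "\<And>i. set_integrable \<mu> (cball 0 R) (\<lambda>x. b x $ i)"
    and wm [measurable]: "w \<in> borel_measurable borel" and w0: "\<And>x. 0 \<le> w x" and wW: "\<And>x. w x \<le> W"
    and ws: "\<And>x. w x \<noteq> 0 \<Longrightarrow> norm x \<le> R" and R0: "R \<ge> 0"
  shows "integrable \<mu> w" "integrable \<mu> (\<lambda>z. w z * z$i)" "integrable \<mu> (\<lambda>z. w z * b z $ i)"
    and "integrable \<mu> (\<lambda>z. w z * z$i * b z $ i)"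
proof -
  have wabs: "\<bar>w x\<bar> \<le> W" for x using w0 wW by (simp add: abs_of_nonneg)
  have wz: "\<bar>w z * z$i\<bar> \<le> W * R" for z
  proof (cases "w z = 0")
    case False
    then have "\<bar>z$i\<bar> \<le> R" using ws component_le_norm_cart order_trans by blast
    then show ?thesis using wabs[of z] by (intro abs_mult_mono) auto
  next
    case True
    have "0 \<le> W" using w0 wW order_trans by blast
    then show ?thesis using True R0 by simp
  qed
  show "integrable \<mu> w" by (rule integrable_bounded_borel[OF P S wm wabs])
  show "integrable \<mu> (\<lambda>z. w z * z$i)" by (rule integrable_bounded_borel[OF P S _ wz]) measurable
  show "integrable \<mu> (\<lambda>z. w z * b z $ i)"
    by (rule integrable_mult_bounded_supported[OF S _ loc wm wabs ws]) measurable
  show "integrable \<mu> (\<lambda>z. w z * z$i * b z $ i)"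
    by (rule integrable_mult_bounded_supported[OF S _ loc _ wz]) (use ws in auto)
qed

text \<open>Expanding the inner product separates the variables, so the double integral is a sum of
  products of single integrals and no Fubini argument is needed.\<close>

lemma integral_integral_pairing_eq:
  fixes \<mu> :: "(real^'n::finite) measure" and b :: "real^'n \<Rightarrow> real^'n" and w :: "real^'n \<Rightarrow> real"
  assumes "prob_space \<mu>" "sets \<mu> = sets borel" "b \<in> borel_measurable borel"
    and "\<And>i. set_integrable \<mu> (cball 0 R) (\<lambda>x. b x $ i)"
    and "w \<in> borel_measurable borel" "\<And>x. 0 \<le> w x" "\<And>x. w x \<le> W"
    and "\<And>x. w x \<noteq> 0 \<Longrightarrow> norm x \<le> R" "R \<ge> 0"
  shows "(\<integral>x. (\<integral>z. w x * w z * inner (b x - b z) (x - z) \<partial>\<mu>) \<partial>\<mu>) =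
    2 * (\<integral>x. w x * inner (b x) ((\<integral>z. w z \<partial>\<mu>) *\<^sub>R x - (\<chi> i. \<integral>z. w z * z$i \<partial>\<mu>)) \<partial>\<mu>)"
proof -
  interpret prob_space \<mu> by fact
  note iw = integrable_weighted_moments(1)[OF assms]
    and iwz = integrable_weighted_moments(2)[OF assms]
    and iwb = integrable_weighted_moments(3)[OF assms]
    and iwzb = integrable_weighted_moments(4)[OF assms]
  define cw where "cw = (\<integral>z. w z \<partial>\<mu>)"
  define M where "M i = (\<integral>z. w z * z$i \<partial>\<mu>)" for i
  define V where "V i = (\<integral>z. w z * b z $ i \<partial>\<mu>)" for i
  define Bs where "Bs = (\<integral>z. (\<Sum>i\<in>UNIV. (w z * z$i) * b z $ i) \<partial>\<mu>)"
  have expand: "w x * w z * inner (b x - b z) (x - z) = (w x * (\<Sum>i\<in>UNIV. b x $ i * x$i)) * w z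
      - (\<Sum>i\<in>UNIV. (w x * b x $ i) * (w z * z$i)) - (\<Sum>i\<in>UNIV. (w x * x$i) * (w z * b z $ i))
      + w x * (\<Sum>i\<in>UNIV. (w z * z$i) * b z $ i)" for x z
    by (simp add: inner_vec_def sum_distrib_left sum_subtractf[symmetric] sum.distrib[symmetric]
        algebra_simps)
  have inner_integral: "(\<integral>z. w x * w z * inner (b x - b z) (x - z) \<partial>\<mu>) =
      (w x * (\<Sum>i\<in>UNIV. b x $ i * x$i)) * cw - (\<Sum>i\<in>UNIV. (w x * b x $ i) * M i)
      - (\<Sum>i\<in>UNIV. (w x * x$i) * V i) + w x * Bs" for x
  proof -
    have "integrable \<mu> (\<lambda>z. (w x * (\<Sum>i\<in>UNIV. b x $ i * x$i)) * w z)"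
      and "integrable \<mu> (\<lambda>z. \<Sum>i\<in>UNIV. (w x * b x $ i) * (w z * z$i))"
      and "integrable \<mu> (\<lambda>z. \<Sum>i\<in>UNIV. (w x * x$i) * (w z * b z $ i))"
      and "integrable \<mu> (\<lambda>z. w x * (\<Sum>i\<in>UNIV. (w z * z$i) * b z $ i))"
      using iw iwz iwb iwzb by (auto intro!: integrable_sum integrable_mult_right)
    then show ?thesis
      unfolding expand cw_def M_def V_def Bs_def
      using iwz iwb by (simp add: Bochner_Integration.integral_sum)
  qed
  have "(\<integral>x. (\<integral>z. w x * w z * inner (b x - b z) (x - z) \<partial>\<mu>) \<partial>\<mu>)
      = Bs * cw - (\<Sum>i\<in>UNIV. V i * M i) - (\<Sum>i\<in>UNIV. M i * V i) + cw * Bs"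
  proof -
    have eq: "(\<lambda>x. \<integral>z. w x * w z * inner (b x - b z) (x - z) \<partial>\<mu>) = (\<lambda>x. (\<Sum>i\<in>UNIV. (w x * x$i) * b x $ i) * cw
      - (\<Sum>i\<in>UNIV. (w x * b x $ i) * M i) - (\<Sum>i\<in>UNIV. (w x * x$i) * V i) + w x * Bs)"
      unfolding inner_integral by (simp add: fun_eq_iff sum_distrib_left algebra_simps)
    show ?thesis unfolding eq
      by (simp add: iw iwz iwb iwzb integrable_sum integral_sum integral_diff integral_add
          cw_def[symmetric] M_def[symmetric] V_def[symmetric] Bs_def[symmetric])
  qed
  moreover have "(\<integral>x. w x * inner (b x) (cw *\<^sub>R x - (\<chi> i. M i)) \<partial>\<mu>) = cw * Bs - (\<Sum>i\<in>UNIV. M i * V i)"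
  proof -
    have "(\<lambda>x. w x * inner (b x) (cw *\<^sub>R x - (\<chi> i. M i))) =
       (\<lambda>x. cw * (\<Sum>i\<in>UNIV. (w x * x$i) * b x $ i) - (\<Sum>i\<in>UNIV. M i * (w x * b x $ i)))"
      by (simp add: fun_eq_iff inner_vec_def sum_distrib_left sum_subtractf[symmetric] algebra_simps)
    then show ?thesis
      by (simp add: iw iwz iwb iwzb integrable_sum integral_sum
          cw_def[symmetric] M_def[symmetric] V_def[symmetric] Bs_def[symmetric])
  qed
  ultimately show ?thesis by (simp add: cw_def M_def algebra_simps)
qed

lemma integral_monotone_drift_nonneg:
  fixes \<mu> :: "(real^'n::finite) measure" and b :: "real^'n \<Rightarrow> real^'n" and w :: "real^'n \<Rightarrow> real"
  assumes "prob_space \<mu>" "sets \<mu> = sets borel" "b \<in> borel_measurable borel"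
    and mono: "\<And>x y. inner (x - y) (b x - b y) \<ge> 0"
    and "\<And>i. set_integrable \<mu> (cball 0 R) (\<lambda>x. b x $ i)"
    and "w \<in> borel_measurable borel" and w0: "\<And>x. 0 \<le> w x" and "\<And>x. w x \<le> W"
    and "\<And>x. w x \<noteq> 0 \<Longrightarrow> norm x \<le> R" and "R \<ge> 0"
  shows "0 \<le> (\<integral>x. w x * inner (b x) ((\<integral>z. w z \<partial>\<mu>) *\<^sub>R x - (\<chi> i. \<integral>z. w z * z$i \<partial>\<mu>)) \<partial>\<mu>)"
proof -
  have "0 \<le> w x * w z * inner (b x - b z) (x - z)" for x z
    using mono[of x z] w0[of x] w0[of z] by (simp add: inner_commute)
  then have "0 \<le> (\<integral>x. (\<integral>z. w x * w z * inner (b x - b z) (x - z) \<partial>\<mu>) \<partial>\<mu>)"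
    by (intro integral_nonneg_AE AE_I2)
  then show ?thesis
    by (simp add: integral_integral_pairing_eq[OF assms(1-3,5-)])
qed

section \<open>Solutions with monotone drift are concentrated on the zeros of \<open>\<Sigma>\<close>\<close>

lemma AE_eq_const_imp_eq_return:
  assumes "prob_space \<mu>" "sets \<mu> = sets M" "AE x in \<mu>. x = x0"
  shows "\<mu> = return M x0"
proof (rule measure_eqI)
  interpret prob_space \<mu> by fact
  show "sets \<mu> = sets (return M x0)" using assms(2) by simp
  fix A assume A: "A \<in> sets \<mu>"
  have "emeasure \<mu> A = (\<integral>\<^sup>+x. indicator A x \<partial>\<mu>)" using A by simp
  also have "\<dots> = (\<integral>\<^sup>+x. indicator A x0 \<partial>\<mu>)"
    by (rule nn_integral_cong_AE) (use assms(3) in \<open>auto elim!: eventually_mono\<close>)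
  also have "\<dots> = emeasure (return M x0) A" using A assms(2) by (simp add: emeasure_space_1)
  finally show "emeasure \<mu> A = emeasure (return M x0) A" .
qed

lemma mult_transpose_entry_borel_measurable:
  fixes S :: "'a \<Rightarrow> real^'m::finite^'n::finite"
  assumes "\<And>i k. (\<lambda>x. S x $ i $ k) \<in> borel_measurable M"
  shows "(\<lambda>x. (S x ** transpose (S x)) $ i $ j) \<in> borel_measurable M"
  by (auto simp: matrix_matrix_mult_def transpose_def intro!: borel_measurable_sum borel_measurable_times assms)

lemma quadratic_measurable [measurable]: "quadratic c m \<in> borel_measurable borel"
  unfolding quadratic_def[abs_def] by (intro borel_measurable_continuous_onI continuous_intros)

locale monotone_drift_solution =
  fixes S :: "real^'n::finite \<Rightarrow> real^'m::finite^'n"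
    and b :: "real^'n \<Rightarrow> real^'n"
    and \<mu> :: "(real^'n) measure"
  assumes S_measurable [measurable]: "\<And>i k. (\<lambda>x. S x $ i $ k) \<in> borel_measurable borel"
    and S_bounded: "bounded (range S)"
    and b_measurable [measurable]: "b \<in> borel_measurable borel"
    and b_monotone: "\<And>x y. inner (x - y) (b x - b y) \<ge> 0"
    and solution: "prob_solution (\<lambda>x. S x ** transpose (S x)) b \<mu>"
    and integrable_norm_b_mult_norm: "integrable \<mu> (\<lambda>x. norm (b x) * norm x)"
begin

lemma prob_space_measure: "prob_space \<mu>"
  using solution by (simp add: prob_solution_def)

sublocale prob_space \<mu>
  by (rule prob_space_measure)

lemma sets_eq_borel: "sets \<mu> = sets borel"
  using solution by (simp add: prob_solution_def)

lemma set_integrable_b: "compact K \<Longrightarrow> set_integrable \<mu> K (\<lambda>x. b x $ i)"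
  using solution by (simp add: prob_solution_def)

lemma integral_Lop_eq_0: "test_fun f \<Longrightarrow> (\<integral>x. Lop (\<lambda>x. S x ** transpose (S x)) b f x \<partial>\<mu>) = 0"
  using solution by (simp add: prob_solution_def)

lemma borel_measurable_\<mu>: "f \<in> borel_measurable borel \<Longrightarrow> f \<in> borel_measurable \<mu>"
  by (rule measurable_sets_borel[OF sets_eq_borel])

lemma integrable_bounded:
  fixes f :: "real^'n \<Rightarrow> real"
  shows "f \<in> borel_measurable borel \<Longrightarrow> (\<And>x. \<bar>f x\<bar> \<le> B) \<Longrightarrow> integrable \<mu> f"
  by (rule integrable_bounded_borel[OF prob_space_measure sets_eq_borel])

lemma diffusion_entry_measurable [measurable]:
  "(\<lambda>x. (S x ** transpose (S x)) $ i $ j) \<in> borel_measurable borel"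
  by (rule mult_transpose_entry_borel_measurable[OF S_measurable])

lemma norm_S_power2_measurable [measurable]: "(\<lambda>x. (norm (S x))^2) \<in> borel_measurable borel"
  unfolding norm_matrix_power2 by measurable

lemma norm_S_power2_bound: obtains B where "\<And>x. (norm (S x))^2 \<le> B"
proof -
  obtain B where "\<And>x. norm (S x) \<le> B" using S_bounded unfolding bounded_iff by blast
  then have "(norm (S x))^2 \<le> B^2" for x by (simp add: power_mono)
  then show ?thesis using that by blast
qed

lemma integrable_norm_S_power2: "integrable \<mu> (\<lambda>x. (norm (S x))^2)"
proof -
  obtain B where "\<And>x. (norm (S x))^2 \<le> B" using norm_S_power2_bound by blast
  then show ?thesis by (intro integrable_bounded[where B = B]) auto
qed

definition cutoff_mass :: "real \<Rightarrow> real" where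
  "cutoff_mass R = (\<integral>x. cutoff R x \<partial>\<mu>)"

definition cutoff_moment :: "real \<Rightarrow> real^'n" where
  "cutoff_moment R = (\<chi> i. \<integral>x. cutoff R x * x $ i \<partial>\<mu>)"

abbreviation remainder :: "real \<Rightarrow> real^'n \<Rightarrow> real" where
  "remainder R \<equiv> cutoff_remainder (\<lambda>x. S x ** transpose (S x)) b R (cutoff_mass R) (cutoff_moment R)"

lemma cutoff_mass_bounds: "0 \<le> cutoff_mass R" "cutoff_mass R \<le> 1"
proof -
  have "integrable \<mu> (cutoff R)"
    by (rule integrable_bounded[where B = 1]) (simp_all add: cutoff_nonneg cutoff_le_1)
  then show "0 \<le> cutoff_mass R" "cutoff_mass R \<le> 1"
    unfolding cutoff_mass_def using cutoff_nonneg cutoff_le_1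
    by (auto intro!: integral_nonneg_AE integral_le_const AE_I2)
qed

lemma abs_cutoff_moment_le: "R > 0 \<Longrightarrow> \<bar>cutoff_moment R $ i\<bar> \<le> R"
proof -
  assume "R > 0"
  then have "\<bar>\<integral>x. cutoff R x * x $ i \<partial>\<mu>\<bar> \<le> (\<integral>x. R \<partial>\<mu>)"
    using abs_cutoff_mult_component_le[of R]
    by (intro integral_abs_bound_integral integrable_bounded[where B = R]) auto
  then show ?thesis by (simp add: cutoff_moment_def prob_space)
qed

lemma remainder_measurable [measurable]: "remainder R \<in> borel_measurable borel"
  unfolding cutoff_remainder_def[abs_def] cutoff_term1_def cutoff_term2_def by measurable

lemma remainder_bounds:
  obtains D where "\<And>R x. R \<ge> 1 \<Longrightarrow> \<bar>remainder R x\<bar> \<le> D * (1 + norm (b x) * norm x) * (norm x / R)"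
    and "\<And>R x. R \<ge> 1 \<Longrightarrow> \<bar>remainder R x\<bar> \<le> D * (1 + norm (b x) * norm x)"
proof -
  obtain B where B: "\<And>x. (norm (S x))^2 \<le> B" using norm_S_power2_bound by blast
  have A: "\<bar>(S x ** transpose (S x)) $ i $ j\<bar> \<le> B" for x i j
    using abs_mult_transpose_self_le[of "S x" i j] B[of x] by linarith
  obtain D where "0 \<le> D"
    and D0: "\<And>R c m x. R \<ge> 1 \<Longrightarrow> \<bar>c\<bar> \<le> 1 \<Longrightarrow> (\<And>i. \<bar>m $ i\<bar> \<le> R) \<Longrightarrow>
      \<bar>cutoff_remainder (\<lambda>x. S x ** transpose (S x)) b R c m x\<bar> \<le> D * (1 + norm (b x) * norm x) * (norm x / R)"
    using cutoff_remainder_bound[where A = "\<lambda>x. S x ** transpose (S x)" and b = b, OF A] by blast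
  have D: "\<bar>remainder R x\<bar> \<le> D * (1 + norm (b x) * norm x) * (norm x / R)" if "R \<ge> 1" for R x
    using that cutoff_mass_bounds[of R] abs_cutoff_moment_le[of R] by (intro D0) auto
  moreover have "\<bar>remainder R x\<bar> \<le> D * (1 + norm (b x) * norm x)" if "R \<ge> 1" for R x
  proof (cases "R \<le> norm x")
    case True
    with \<open>R \<ge> 1\<close> \<open>0 \<le> D\<close> show ?thesis by (simp add: cutoff_remainder_eq_0)
  next
    case False
    with \<open>R \<ge> 1\<close> \<open>0 \<le> D\<close> have "D * (1 + norm (b x) * norm x) * (norm x / R) \<le> D * (1 + norm (b x) * norm x)"
      by (intro mult_left_le) simp_all
    with D[OF that, of x] show ?thesis by linarith
  qed
  ultimately show ?thesis using that by blast
qed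

lemma integrable_remainder: "R \<ge> 1 \<Longrightarrow> integrable \<mu> (remainder R)"
proof -
  assume "R \<ge> 1"
  obtain D where "\<And>R x. R \<ge> 1 \<Longrightarrow> \<bar>remainder R x\<bar> \<le> D * (1 + norm (b x) * norm x) * (norm x / R)"
    and D: "\<And>R x. R \<ge> 1 \<Longrightarrow> \<bar>remainder R x\<bar> \<le> D * (1 + norm (b x) * norm x)"
    using remainder_bounds by blast
  show ?thesis
    by (rule Bochner_Integration.integrable_bound[of _ "\<lambda>x. D * (1 + norm (b x) * norm x)"])
      (use integrable_norm_b_mult_norm D[OF \<open>R \<ge> 1\<close>] in
        \<open>auto intro!: borel_measurable_\<mu> AE_I2 intro: order_trans[OF _ abs_ge_self]\<close>)
qed

lemma tendsto_integral_remainder: "((\<lambda>R. \<integral>x. remainder R x \<partial>\<mu>) \<longlongrightarrow> 0) at_top"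
proof -
  obtain D where D1: "\<And>R x. R \<ge> 1 \<Longrightarrow> \<bar>remainder R x\<bar> \<le> D * (1 + norm (b x) * norm x) * (norm x / R)"
    and D2: "\<And>R x. R \<ge> 1 \<Longrightarrow> \<bar>remainder R x\<bar> \<le> D * (1 + norm (b x) * norm x)"
    using remainder_bounds by blast
  have "((\<lambda>R. remainder R x) \<longlongrightarrow> 0) at_top" for x
  proof (rule Lim_null_comparison)
    show "\<forall>\<^sub>F R in at_top. norm (remainder R x) \<le> D * (1 + norm (b x) * norm x) * (norm x / R)"
      using D1 by (auto intro: eventually_at_top_linorderI[of 1])
    show "((\<lambda>R. D * (1 + norm (b x) * norm x) * (norm x / R)) \<longlongrightarrow> 0) at_top"
      by (intro tendsto_mult_right_zero tendsto_divide_0[OF tendsto_const]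
          filterlim_at_top_imp_at_infinity filterlim_ident)
  qed
  then have "((\<lambda>R. \<integral>x. remainder R x \<partial>\<mu>) \<longlongrightarrow> (\<integral>x. 0 \<partial>\<mu>)) at_top"
    using D2 integrable_norm_b_mult_norm
    by (intro integral_dominated_convergence_at_top[where w = "\<lambda>x. D * (1 + norm (b x) * norm x)"])
      (auto intro: borel_measurable_\<mu> eventually_at_top_linorderI[of 1])
  then show ?thesis by simp
qed

lemma tendsto_cutoff_mass: "(cutoff_mass \<longlongrightarrow> exp (-1)) at_top"
proof -
  have "((\<lambda>R. \<integral>x. cutoff R x \<partial>\<mu>) \<longlongrightarrow> (\<integral>x. exp (-1) \<partial>\<mu>)) at_top"
    by (rule integral_dominated_convergence_at_top[where w = "\<lambda>x. 1"])
      (auto intro: borel_measurable_\<mu> tendsto_cutoff simp: cutoff_nonneg cutoff_le_1)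
  then show ?thesis by (simp add: cutoff_mass_def[abs_def] prob_space)
qed

lemma tendsto_integral_cutoff_norm_S:
  "((\<lambda>R. \<integral>x. cutoff R x * (norm (S x))^2 \<partial>\<mu>) \<longlongrightarrow> exp (-1) * (\<integral>x. (norm (S x))^2 \<partial>\<mu>)) at_top"
proof -
  obtain B where "\<And>x. (norm (S x))^2 \<le> B" using norm_S_power2_bound by blast
  then have "((\<lambda>R. \<integral>x. cutoff R x * (norm (S x))^2 \<partial>\<mu>) \<longlongrightarrow> (\<integral>x. exp (-1) * (norm (S x))^2 \<partial>\<mu>)) at_top"
    using cutoff_nonneg cutoff_le_1
    by (intro integral_dominated_convergence_at_top[where w = "\<lambda>x. B"] always_eventually allI AE_I2)
      (auto intro!: borel_measurable_\<mu> tendsto_mult tendsto_cutoff mult_left_le_one_le[THEN order_trans]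
        simp: abs_mult abs_cutoff_le_1)
  then show ?thesis by simp
qed

lemma integral_drift_nonneg:
  "R > 0 \<Longrightarrow> 0 \<le> (\<integral>x. cutoff R x * inner (b x) (cutoff_mass R *\<^sub>R x - cutoff_moment R) \<partial>\<mu>)"
  unfolding cutoff_mass_def cutoff_moment_def
  by (rule integral_monotone_drift_nonneg[where W = 1 and R = R, OF prob_space_measure sets_eq_borel
        b_measurable b_monotone set_integrable_b[OF compact_cball]])
    (use cutoff_deriv_eq_0[of R _ 0] in \<open>force simp: cutoff_nonneg cutoff_le_1\<close>)+

lemma integrable_drift:
  assumes "R > 0"
  shows "integrable \<mu> (\<lambda>x. cutoff R x * inner (b x) (cutoff_mass R *\<^sub>R x - cutoff_moment R))"
proof -
  define h where "h i x = cutoff R x * (cutoff_mass R * x $ i - cutoff_moment R $ i)" for i x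
  have "\<bar>h i x\<bar> \<le> 1 * R + 1 * R" for i x
  proof -
    have "h i x = cutoff_mass R * (cutoff R x * x $ i) - cutoff R x * cutoff_moment R $ i"
      by (simp add: h_def algebra_simps)
    moreover have "\<bar>cutoff_mass R * (cutoff R x * x $ i)\<bar> \<le> 1 * R"
      using cutoff_mass_bounds[of R] abs_cutoff_mult_component_le[OF assms]
      by (intro abs_mult_mono) auto
    moreover have "\<bar>cutoff R x * cutoff_moment R $ i\<bar> \<le> 1 * R"
      using abs_cutoff_le_1 abs_cutoff_moment_le[OF assms] by (rule abs_mult_mono)
    ultimately show ?thesis by linarith
  qed
  moreover have "h i x \<noteq> 0 \<Longrightarrow> norm x \<le> R" for i x
    using cutoff_deriv_eq_0[OF assms, of x 0] by (force simp: h_def)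
  ultimately have "integrable \<mu> (\<lambda>x. h i x * b x $ i)" for i
    by (intro integrable_mult_bounded_supported[OF sets_eq_borel _ set_integrable_b[OF compact_cball]])
      (auto simp: h_def)
  then have "integrable \<mu> (\<lambda>x. \<Sum>i\<in>UNIV. h i x * b x $ i)" by auto
  then show ?thesis
    by (simp add: h_def inner_vec_def sum_distrib_left mult_ac)
qed

lemma integrable_cutoff_norm_S: "integrable \<mu> (\<lambda>x. cutoff R x * (norm (S x))^2)"
proof -
  obtain B where B: "\<And>x. (norm (S x))^2 \<le> B" using norm_S_power2_bound by blast
  have "\<bar>cutoff R x * (norm (S x))^2\<bar> \<le> 1 * B" for x
    using abs_cutoff_le_1 B[of x] by (intro abs_mult_mono) auto
  then show ?thesis by (intro integrable_bounded) auto
qed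

lemma integral_test_quadratic_le:
  assumes "R \<ge> 1"
  shows "(\<integral>x. remainder R x \<partial>\<mu>) + 2 * cutoff_mass R * (\<integral>x. cutoff R x * (norm (S x))^2 \<partial>\<mu>) \<le> 0"
proof -
  let ?drift = "\<lambda>x. cutoff R x * inner (b x) (cutoff_mass R *\<^sub>R x - cutoff_moment R)"
  have "0 = (\<integral>x. Lop (\<lambda>x. S x ** transpose (S x)) b (test_quadratic R (cutoff_mass R) (cutoff_moment R)) x \<partial>\<mu>)"
    using assms by (simp add: integral_Lop_eq_0 test_fun_test_quadratic)
  also have "\<dots> = (\<integral>x. remainder R x + 2 * cutoff_mass R * (cutoff R x * (norm (S x))^2) + 2 * ?drift x \<partial>\<mu>)"
    by (simp add: Lop_test_quadratic trace_mult_transpose_self mult_ac)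
  also have "\<dots> = (\<integral>x. remainder R x \<partial>\<mu>) + 2 * cutoff_mass R * (\<integral>x. cutoff R x * (norm (S x))^2 \<partial>\<mu>)
      + 2 * (\<integral>x. ?drift x \<partial>\<mu>)"
    using assms integrable_remainder integrable_cutoff_norm_S integrable_drift by simp
  finally show ?thesis
    using integral_drift_nonneg[of R] assms by linarith
qed

lemma AE_S_eq_0: "AE x in \<mu>. S x = 0"
proof -
  have "((\<lambda>R. (\<integral>x. remainder R x \<partial>\<mu>) + 2 * cutoff_mass R * (\<integral>x. cutoff R x * (norm (S x))^2 \<partial>\<mu>))
      \<longlongrightarrow> 0 + 2 * exp (-1) * (exp (-1) * (\<integral>x. (norm (S x))^2 \<partial>\<mu>))) at_top"
    by (intro tendsto_intros tendsto_integral_remainder tendsto_cutoff_mass tendsto_integral_cutoff_norm_S)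
  then have "0 + 2 * exp (-1) * (exp (-1) * (\<integral>x. (norm (S x))^2 \<partial>\<mu>)) \<le> 0"
    by (rule tendsto_upperbound) (auto intro: eventually_at_top_linorderI[of 1] integral_test_quadratic_le)
  then have "(\<integral>x. (norm (S x))^2 \<partial>\<mu>) = 0"
    by (simp add: mult_le_0_iff antisym integral_nonneg_AE)
  with integrable_norm_S_power2 have "AE x in \<mu>. (norm (S x))^2 = 0"
    by (simp add: integral_nonneg_eq_0_iff_AE)
  then show ?thesis by (rule AE_mp) simp
qed

lemma eq_return_at_zero:
  assumes "\<And>x y. x \<noteq> y \<Longrightarrow> S x \<noteq> S y"
  shows "\<exists>x0. S x0 = 0 \<and> \<mu> = return borel x0"
proof -
  have "\<exists>x0. S x0 = 0"
  proof (rule ccontr)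
    assume "\<nexists>x0. S x0 = 0"
    with AE_S_eq_0 have "AE x in \<mu>. False" by simp
    then show False by simp
  qed
  then obtain x0 where x0: "S x0 = 0" ..
  have "AE x in \<mu>. x = x0"
    using AE_S_eq_0 by eventually_elim (metis x0 assms)
  then have "\<mu> = return borel x0"
    by (rule AE_eq_const_imp_eq_return[OF prob_space_measure sets_eq_borel])
  with x0 show ?thesis by blast
qed

end

lemma prob_solution_return:
  fixes A :: "real^'n::finite \<Rightarrow> real^'n^'n" and b :: "real^'n \<Rightarrow> real^'n"
  assumes A: "\<And>i j. (\<lambda>x. A x $ i $ j) \<in> borel_measurable borel"
    and b: "\<And>i. (\<lambda>x. b x $ i) \<in> borel_measurable borel"
    and "A x0 = 0" "b x0 = 0"
  shows "prob_solution A b (return borel x0)"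
proof -
  have integrable_return: "integrable (return borel x0) f" if "f \<in> borel_measurable borel" for f :: "real^'n \<Rightarrow> real"
    using that by (simp add: integrable_iff_bounded nn_integral_return)
  have "(\<integral>x. Lop A b f x \<partial>return borel x0) = 0" for f
  proof (cases "integrable (return borel x0) (Lop A b f)")
    case True
    then have "(\<integral>x. Lop A b f x \<partial>return borel x0) = Lop A b f x0"
      by (intro integral_return) (auto dest: borel_measurable_integrable)
    then show ?thesis using assms by (simp add: Lop_def)
  qed (rule not_integrable_integral_eq)
  moreover have "set_integrable (return borel x0) K (\<lambda>x. A x $ i $ j)"
    and "set_integrable (return borel x0) K (\<lambda>x. b x $ i)" if "compact K" for K i j
    using that compact_imp_closed[OF that] A b
    by (auto simp: set_integrable_def intro!: integrable_return)
  ultimately show ?thesis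
    by (simp add: prob_solution_def prob_space_return)
qed

lemma bounded_range_if_entries_bounded:
  fixes S :: "'a \<Rightarrow> real^'m::finite^'n::finite"
  assumes "\<And>x i k. \<bar>S x $ i $ k\<bar> \<le> C"
  shows "bounded (range S)"
proof -
  have "(norm (S x))^2 \<le> real CARD('n) * real CARD('m) * C^2" for x
  proof -
    have "(norm (S x))^2 \<le> (\<Sum>i\<in>(UNIV::'n set). \<Sum>k\<in>(UNIV::'m set). C^2)"
      unfolding norm_matrix_power2
      using power_mono[OF assms abs_ge_zero, of _ _ _ 2] by (intro sum_mono) simp
    then show ?thesis by simp
  qed
  then show ?thesis
    unfolding bounded_iff by (auto intro: real_le_rsqrt)
qed

theorem mainTheorem7:
  fixes \<Sigma> :: "real^'n::finite \<Rightarrow> real^'m::finite^'n"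
    and b :: "real^'n \<Rightarrow> real^'n"
  assumes Sigma_meas: "\<And>i k. (\<lambda>x. \<Sigma> x $ i $ k) \<in> borel_measurable borel"
    and Sigma_bdd: "\<exists>C. \<forall>x i k. \<bar>\<Sigma> x $ i $ k\<bar> \<le> C"
    and Sigma_inj: "\<And>x y. x \<noteq> y \<Longrightarrow> \<Sigma> x \<noteq> \<Sigma> y"
    and b_meas: "b \<in> borel_measurable borel"
    and b_mono: "\<And>x y. inner (x - y) (b x - b y) \<ge> 0"
  shows "(\<forall>\<mu> \<nu>. prob_solution (\<lambda>x. \<Sigma> x ** transpose (\<Sigma> x)) b \<mu>
              \<and> integrable \<mu> (\<lambda>x. norm (b x) * norm x)
              \<and> prob_solution (\<lambda>x. \<Sigma> x ** transpose (\<Sigma> x)) b \<nu>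
              \<and> integrable \<nu> (\<lambda>x. norm (b x) * norm x) \<longrightarrow> \<mu> = \<nu>)
      \<and> (b = (\<lambda>x. 0) \<longrightarrow>
           (\<forall>\<mu> \<nu>. prob_solution (\<lambda>x. \<Sigma> x ** transpose (\<Sigma> x)) b \<mu>
              \<and> prob_solution (\<lambda>x. \<Sigma> x ** transpose (\<Sigma> x)) b \<nu> \<longrightarrow> \<mu> = \<nu>))
      \<and> (\<forall>x0. b = (\<lambda>x. 0) \<and> \<Sigma> x0 = 0 \<longrightarrow>
           prob_solution (\<lambda>x. \<Sigma> x ** transpose (\<Sigma> x)) b (return borel x0)
           \<and> (\<forall>\<mu>. prob_solution (\<lambda>x. \<Sigma> x ** transpose (\<Sigma> x)) b \<mu> \<longrightarrow>
                  \<mu> = return borel x0))"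
proof -
  let ?A = "\<lambda>x. \<Sigma> x ** transpose (\<Sigma> x)"
  have bounded: "bounded (range \<Sigma>)"
    using Sigma_bdd bounded_range_if_entries_bounded by metis
  have unique: "\<mu> = \<nu>"
    if "b' \<in> borel_measurable borel" "\<And>x y. inner (x - y) (b' x - b' y) \<ge> 0"
      and "prob_solution ?A b' \<mu>" "integrable \<mu> (\<lambda>x. norm (b' x) * norm x)"
      and "prob_solution ?A b' \<nu>" "integrable \<nu> (\<lambda>x. norm (b' x) * norm x)" for b' \<mu> \<nu>
  proof -
    have "monotone_drift_solution \<Sigma> b' \<mu>" "monotone_drift_solution \<Sigma> b' \<nu>"
      using that Sigma_meas bounded by (simp_all add: monotone_drift_solution_def)
    then obtain x1 x2 where "\<Sigma> x1 = 0" "\<mu> = return borel x1" "\<Sigma> x2 = 0" "\<nu> = return borel x2"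
      using monotone_drift_solution.eq_return_at_zero Sigma_inj by metis
    then show ?thesis using Sigma_inj by metis
  qed
  have return_solution: "prob_solution ?A (\<lambda>x. 0) (return borel x0)" if "\<Sigma> x0 = 0" for x0
    using that mult_transpose_entry_borel_measurable[OF Sigma_meas]
    by (intro prob_solution_return) (auto simp: transpose_def matrix_matrix_mult_def vec_eq_iff)
  show ?thesis
    using unique[OF b_meas b_mono] unique[of "\<lambda>x. 0"] return_solution by auto
qed

end
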